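(* Let $k\ge1$, $W^k=\,]-1/2,1/2]^k$, and let $\Lambda\subset\mathbf{R}^k$ be a lattice of covolume $1$ such that $D_c(W^k+\Lambda)\ge1/2$. Then for every $v\in\mathbf{R}^k$, \[D_c\big((W^k+\Lambda+v)\cap(W^k+\Lambda)\big)\ge2D_c(W^k+\Lambda)-1.\]
   Context: For $E\subset\mathbf{R}^k$, $D_c(E)=\lim_{R\to\infty}\operatorname{Leb}(B_R\cap E)/\operatorname{Leb}(B_R)$, where $B_R=\{x:\|x\|_\infty\le R\}$ (this limit exists for the $\Lambda$-periodic sets considered). *)

theory Defs
  imports "HOL-Analysis.Analysis"
begin

definition lattice_of :: "real^'n^'n \<Rightarrow> (real^'n) set" where
  "lattice_of B = {B *v (\<chi> i. real_of_int (z i)) | z :: 'n \<Rightarrow> int. True}"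

definition is_lattice :: "(real^'n) set \<Rightarrow> bool" where
  "is_lattice L \<longleftrightarrow> (\<exists>B. invertible B \<and> L = lattice_of B)"

definition covolume_one_lattice :: "(real^'n) set \<Rightarrow> bool" where
  "covolume_one_lattice L \<longleftrightarrow> (\<exists>B. invertible B \<and> \<bar>det B\<bar> = 1 \<and> L = lattice_of B)"

definition Wcube :: "(real^'n) set" where
  "Wcube = {x. \<forall>i. -1/2 < x$i \<and> x$i \<le> 1/2}"

definition supball :: "real \<Rightarrow> (real^'n) set" where
  "supball R = {x. \<forall>i. \<bar>x$i\<bar> \<le> R}"

definition msum :: "(real^'n) set \<Rightarrow> (real^'n) set \<Rightarrow> (real^'n) set" where
  "msum A C = {a + c | a c. a \<in> A \<and> c \<in> C}"

text \<open>Density D_c(E) = lim_{R\<rightarrow>\<infinity>} Leb(B_R \<inter> E)/Leb(B_R) (the limit exists for the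
  periodic sets considered).\<close>
definition Dc :: "(real^'n) set \<Rightarrow> real" where
  "Dc E = Lim at_top (\<lambda>R::real. measure lebesgue (supball R \<inter> E) / measure lebesgue (supball R :: (real^'n) set))"

end

theory Submission
  imports Defs "HOL-Real_Asymp.Real_Asymp"
begin

text \<open>Let \<open>P\<close> be a bounded fundamental cell of the lattice \<open>\<Lambda>\<close>. Every translate of a fundamental
  cell meets a \<open>\<Lambda>\<close>-periodic Borel set \<open>A\<close> in the same measure. Integrating
  \<open>|B\<^sub>R \<inter> (A - y)|\<close> over \<open>y \<in> P\<close> (Tonelli) therefore gives \<open>|P \<inter> A| |B\<^sub>R|\<close>, while each
  integrand lies between \<open>|B\<^sub>R\<^sub>-\<^sub>d \<inter> A|\<close> and \<open>|B\<^sub>R\<^sub>+\<^sub>d \<inter> A|\<close>; hence \<open>D\<^sub>c(A) = |P \<inter> A| / |P|\<close>.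
  So translating \<open>E = W\<^sup>k + \<Lambda>\<close> does not change its density, and inclusion-exclusion inside \<open>P\<close>
  gives \<open>|P \<inter> (E + v) \<inter> E| \<ge> |P \<inter> (E + v)| + |P \<inter> E| - |P|\<close>.\<close>

definition periodic_set :: "'a::ab_group_add set \<Rightarrow> 'a set \<Rightarrow> bool" where
  "periodic_set \<Lambda> A \<longleftrightarrow> (\<forall>l\<in>\<Lambda>. \<forall>x. x + l \<in> A \<longleftrightarrow> x \<in> A)"

definition fundamental_domain :: "'a::euclidean_space set \<Rightarrow> 'a set \<Rightarrow> bool" where
  "fundamental_domain \<Lambda> F \<longleftrightarrow> F \<in> sets borel \<and> (\<forall>y. \<exists>!l. l \<in> \<Lambda> \<and> y - l \<in> F)"

lemma borel_translate_vimage: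
  fixes c :: "'a::euclidean_space"
  assumes "X \<in> sets borel"
  shows "(\<lambda>x. x + c) -` X \<in> sets borel"
proof -
  have "(\<lambda>x. x + c) \<in> borel_measurable borel"
    by (intro borel_measurable_continuous_onI continuous_intros)
  from measurable_sets[OF this assms] show ?thesis by simp
qed

lemma translate_image_eq_vimage:
  fixes c :: "'a::ab_group_add"
  shows "(\<lambda>x. x + c) ` X = (\<lambda>x. x + - c) -` X"
  by force

lemma emeasure_lborel_translate:
  fixes c :: "'a::euclidean_space"
  assumes "X \<in> sets borel"
  shows "emeasure lborel ((\<lambda>x. x + c) -` X) = emeasure lborel X"
proof -
  have "emeasure lborel X = emeasure (distr lborel borel ((+) c)) X"
    by (simp add: lborel_distr_plus)
  also have "\<dots> = emeasure lborel ((+) c -` X)"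
    using assms by (subst emeasure_distr) auto
  finally show ?thesis by (simp add: vimage_def add.commute)
qed

lemma emeasure_Int_eq_sum_tiles:
  fixes \<Lambda> :: "'a::euclidean_space set"
  assumes "countable \<Lambda>" "fundamental_domain \<Lambda> Q" "P \<in> sets borel" "A \<in> sets borel"
  shows "emeasure lborel (P \<inter> A) = (\<integral>\<^sup>+l. emeasure lborel {y \<in> P \<inter> A. y - l \<in> Q} \<partial>count_space \<Lambda>)"
proof -
  have Q: "Q \<in> sets borel" and tile: "\<And>y. \<exists>!l. l \<in> \<Lambda> \<and> y - l \<in> Q"
    using assms(2) by (auto simp: fundamental_domain_def)
  have "P \<inter> A = (\<Union>l\<in>\<Lambda>. {y \<in> P \<inter> A. y - l \<in> Q})"
    using tile by blast
  also have "emeasure lborel \<dots> = (\<integral>\<^sup>+l. emeasure lborel {y \<in> P \<inter> A. y - l \<in> Q} \<partial>count_space \<Lambda>)"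
  proof (rule emeasure_UN_countable)
    show "disjoint_family_on (\<lambda>l. {y \<in> P \<inter> A. y - l \<in> Q}) \<Lambda>"
      using tile by (auto simp: disjoint_family_on_def)
  qed (use assms(1,3,4) Q in measurable)
  finally show ?thesis .
qed

lemma emeasure_tile_swap:
  fixes \<Lambda> :: "'a::euclidean_space set"
  assumes "periodic_set \<Lambda> A" "l \<in> \<Lambda>" "P \<in> sets borel" "Q \<in> sets borel" "A \<in> sets borel"
  shows "emeasure lborel {y \<in> P \<inter> A. y - l \<in> Q} = emeasure lborel {y \<in> Q \<inter> A. y - - l \<in> P}"
proof -
  have "{y \<in> Q \<inter> A. y - - l \<in> P} = (\<lambda>x. x + l) -` {y \<in> P \<inter> A. y - l \<in> Q}"
    using assms(1,2) by (auto simp: periodic_set_def)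
  also have "emeasure lborel \<dots> = emeasure lborel {y \<in> P \<inter> A. y - l \<in> Q}"
    by (intro emeasure_lborel_translate) (use assms(3-5) in measurable)
  finally show ?thesis ..
qed

text \<open>Both sides equal \<open>\<Sum>\<^sub>l |P \<inter> (Q + l) \<inter> A|\<close>: translating the \<open>l\<close>-th piece by \<open>-l\<close>
  exchanges the roles of \<open>P\<close> and \<open>Q\<close>.\<close>

lemma fundamental_domain_emeasure_Int_eq:
  fixes \<Lambda> :: "'a::euclidean_space set"
  assumes "countable \<Lambda>" "\<And>l. l \<in> \<Lambda> \<Longrightarrow> - l \<in> \<Lambda>"
    and "fundamental_domain \<Lambda> P" "fundamental_domain \<Lambda> Q"
    and "A \<in> sets borel" "periodic_set \<Lambda> A"
  shows "emeasure lborel (P \<inter> A) = emeasure lborel (Q \<inter> A)"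
proof -
  have borel: "P \<in> sets borel" "Q \<in> sets borel"
    using assms(3,4) by (auto simp: fundamental_domain_def)
  have "bij_betw uminus \<Lambda> \<Lambda>"
    using assms(2) by (intro bij_betw_byWitness[where f'=uminus]) auto
  have "emeasure lborel (P \<inter> A) = (\<integral>\<^sup>+l. emeasure lborel {y \<in> P \<inter> A. y - l \<in> Q} \<partial>count_space \<Lambda>)"
    using assms borel by (intro emeasure_Int_eq_sum_tiles)
  also have "\<dots> = (\<integral>\<^sup>+l. emeasure lborel {y \<in> Q \<inter> A. y - - l \<in> P} \<partial>count_space \<Lambda>)"
    using assms borel by (intro nn_integral_cong emeasure_tile_swap) auto
  also have "\<dots> = (\<integral>\<^sup>+l. emeasure lborel {y \<in> Q \<inter> A. y - l \<in> P} \<partial>count_space \<Lambda>)"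
    by (rule nn_integral_bij_count_space) fact
  also have "\<dots> = emeasure lborel (Q \<inter> A)"
    using assms borel by (intro emeasure_Int_eq_sum_tiles[symmetric])
  finally show ?thesis .
qed

lemma fundamental_domain_translate:
  fixes \<Lambda> :: "'a::euclidean_space set"
  assumes "fundamental_domain \<Lambda> F"
  shows "fundamental_domain \<Lambda> ((\<lambda>x. x + c) -` F)"
proof -
  have "\<exists>!l. l \<in> \<Lambda> \<and> y - l + c \<in> F" for y
    using assms unfolding fundamental_domain_def
    by (metis (no_types, lifting) add_diff_eq diff_add_eq)
  with assms show ?thesis
    by (simp add: fundamental_domain_def borel_translate_vimage)
qed

lemma fundamental_domain_emeasure_nonzero:
  fixes \<Lambda> :: "'a::euclidean_space set"
  assumes "countable \<Lambda>" "fundamental_domain \<Lambda> F"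
  shows "emeasure lborel F \<noteq> 0"
proof
  assume null: "emeasure lborel F = 0"
  have F: "F \<in> sets borel" and tile: "\<And>y. \<exists>l\<in>\<Lambda>. y - l \<in> F"
    using assms(2) unfolding fundamental_domain_def by blast+
  have null_translates: "(\<lambda>x. x + c) -` F \<in> null_sets lborel" for c
    using null by (simp add: null_setsI emeasure_lborel_translate[OF F] borel_translate_vimage[OF F])
  have "(\<Union>l\<in>\<Lambda>. (\<lambda>x. x + - l) -` F) \<in> null_sets lborel"
    using assms(1) null_translates by (rule null_sets_UN')
  moreover have "(\<Union>l\<in>\<Lambda>. (\<lambda>x. x + - l) -` F) = UNIV"
    using tile by auto
  ultimately show False by (simp add: null_sets_def)
qed

lemma periodic_set_translate:
  assumes "periodic_set \<Lambda> A"
  shows "periodic_set \<Lambda> ((\<lambda>x. x + v) ` A)"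
proof -
  have image_eq: "(\<lambda>x. x + v) ` A = {x. x - v \<in> A}"
    by force
  have "x - v + l \<in> A \<longleftrightarrow> x - v \<in> A" if "l \<in> \<Lambda>" for l x
    using assms that by (simp add: periodic_set_def)
  then show ?thesis
    unfolding periodic_set_def image_eq by (simp add: diff_add_eq)
qed

lemma periodic_set_Int:
  "periodic_set \<Lambda> A \<Longrightarrow> periodic_set \<Lambda> C \<Longrightarrow> periodic_set \<Lambda> (A \<inter> C)"
  by (simp add: periodic_set_def)

lemma supball_borel [measurable]: "supball R \<in> sets (borel :: (real^'n) measure)"
  unfolding supball_def by measurable

lemma supball_eq_cbox: "supball R = cbox (- (\<chi> i. R)) (\<chi> i. R :: real^'n)"
  by (auto simp: supball_def mem_box_cart abs_le_iff minus_le_iff)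

lemma measure_supball:
  assumes "R \<ge> 0"
  shows "measure lborel (supball R :: (real^'n) set) = 2 ^ CARD('n) * R ^ CARD('n)"
proof -
  have "measure lborel (supball R :: (real^'n) set) = (\<Prod>b\<in>Basis. ((\<chi> i. R) - (- (\<chi> i. R)) :: real^'n) \<bullet> b)"
    unfolding supball_eq_cbox
    by (rule measure_lborel_cbox) (use assms in \<open>auto simp: Basis_vec_def inner_axis\<close>)
  also have "\<dots> = (\<Prod>b\<in>(Basis :: (real^'n) set). 2 * R)"
    by (intro prod.cong) (auto simp: Basis_vec_def inner_axis)
  finally show ?thesis by (simp add: power_mult_distrib)
qed

lemma emeasure_supball_Int_finite: "emeasure lborel (supball R \<inter> X :: (real^'n) set) \<noteq> \<infinity>"
proof -
  have "bounded (supball R \<inter> X :: (real^'n) set)"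
    unfolding supball_eq_cbox by (intro bounded_Int) auto
  then show ?thesis using emeasure_bounded_finite by (simp add: less_top)
qed

lemma supball_shift_bounds:
  assumes "y \<in> supball d"
  shows "supball (R - d) \<subseteq> {w. w - y \<in> supball R}" "{w. w - y \<in> supball R} \<subseteq> supball (R + d)"
proof safe
  fix w
  have y: "\<bar>y $ i\<bar> \<le> d" for i using assms by (simp add: supball_def)
  show "w - y \<in> supball R" if "w \<in> supball (R - d)"
  proof -
    have w: "\<bar>w $ i\<bar> \<le> R - d" for i using that by (simp add: supball_def)
    have "\<bar>w $ i - y $ i\<bar> \<le> R" for i using w[of i] y[of i] by arith
    then show ?thesis by (simp add: supball_def)
  qed
  show "w \<in> supball (R + d)" if "w - y \<in> supball R"
  proof -
    have w: "\<bar>w $ i - y $ i\<bar> \<le> R" for i using that by (simp add: supball_def)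
    have "\<bar>w $ i\<bar> \<le> R + d" for i using w[of i] y[of i] by arith
    then show ?thesis by (simp add: supball_def)
  qed
qed

lemma tendsto_div_power_sandwich:
  fixes a :: "real \<Rightarrow> real"
  assumes p: "p > 0" and d: "d \<ge> 0"
    and upper: "\<And>R. R > d \<Longrightarrow> a R * p \<le> c * (R + d) ^ k"
    and lower: "\<And>R. R > d \<Longrightarrow> c * (R - d) ^ k \<le> a R * p"
  shows "((\<lambda>R. a R / R ^ k) \<longlongrightarrow> c / p) at_top"
proof (rule tendsto_sandwich)
  have "((\<lambda>R. (R - d) / R) \<longlongrightarrow> 1) at_top" by real_asymp
  from tendsto_mult_left[OF tendsto_power[OF this, of k], of "c / p"]
  show "((\<lambda>R. c / p * ((R - d) / R) ^ k) \<longlongrightarrow> c / p) at_top" by simp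
  have "((\<lambda>R. (R + d) / R) \<longlongrightarrow> 1) at_top" by real_asymp
  from tendsto_mult_left[OF tendsto_power[OF this, of k], of "c / p"]
  show "((\<lambda>R. c / p * ((R + d) / R) ^ k) \<longlongrightarrow> c / p) at_top" by simp
  show "\<forall>\<^sub>F R in at_top. c / p * ((R - d) / R) ^ k \<le> a R / R ^ k"
    using eventually_gt_at_top[of d]
  proof eventually_elim
    case (elim R)
    with d lower[OF elim] p show ?case by (simp add: power_divide field_simps)
  qed
  show "\<forall>\<^sub>F R in at_top. a R / R ^ k \<le> c / p * ((R + d) / R) ^ k"
    using eventually_gt_at_top[of d]
  proof eventually_elim
    case (elim R)
    with d upper[OF elim] p show ?case by (simp add: power_divide field_simps)
  qed
qed

locale bounded_fundamental_domain =
  fixes \<Lambda> :: "(real^'n) set" and P :: "(real^'n) set"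
  assumes countable_lattice: "countable \<Lambda>"
    and lattice_uminus: "\<And>l. l \<in> \<Lambda> \<Longrightarrow> - l \<in> \<Lambda>"
    and fundamental_domain: "fundamental_domain \<Lambda> P"
    and bounded_domain: "bounded P"
begin

lemma domain_borel [measurable]: "P \<in> sets borel"
  using fundamental_domain by (simp add: fundamental_domain_def)

lemma emeasure_domain_Int_finite: "emeasure lborel (P \<inter> X) \<noteq> \<infinity>"
  using emeasure_bounded_finite[of "P \<inter> X"] bounded_domain by (simp add: bounded_Int less_top)

lemma measure_domain_pos: "0 < measure lborel P"
  using fundamental_domain_emeasure_nonzero[OF countable_lattice fundamental_domain]
    emeasure_domain_Int_finite[of UNIV]
  by (simp add: emeasure_eq_ennreal_measure zero_less_measure_iff)

lemma emeasure_translate_domain_Int: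
  assumes "A \<in> sets borel" "periodic_set \<Lambda> A"
  shows "emeasure lborel ((\<lambda>x. x + c) -` P \<inter> A) = emeasure lborel (P \<inter> A)"
  using countable_lattice lattice_uminus fundamental_domain_translate[OF fundamental_domain]
    fundamental_domain assms
  by (rule fundamental_domain_emeasure_Int_eq)

lemma nn_integral_supball_slices:
  assumes A: "A \<in> sets borel" "periodic_set \<Lambda> A"
  shows "(\<integral>\<^sup>+y. emeasure lborel {z \<in> supball R. z + y \<in> A} * indicator P y \<partial>lborel)
    = emeasure lborel (P \<inter> A) * emeasure lborel (supball R :: (real^'n) set)"
proof -
  define S where "S = {p. fst p \<in> P \<and> snd p \<in> supball R \<and> snd p + fst p \<in> A}"
  have "Measurable.pred (borel \<Otimes>\<^sub>M borel) (\<lambda>p::(real^'n) \<times> (real^'n). fst p \<in> P \<and> snd p \<in> supball R \<and> snd p + fst p \<in> A)"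
    using A by measurable
  then have S: "S \<in> sets (lborel \<Otimes>\<^sub>M lborel)"
    unfolding S_def Measurable.pred_def by (simp add: space_pair_measure)
  have slice: "emeasure lborel ((\<lambda>y. (y, z)) -` S) = emeasure lborel (P \<inter> A) * indicator (supball R) z"
    for z
  proof (cases "z \<in> supball R")
    case True
    have "(\<lambda>y. (y, z)) -` S = (\<lambda>y. y + z) -` ((\<lambda>x. x + - z) -` P \<inter> A)"
      using True by (auto simp: S_def add.commute)
    then have "emeasure lborel ((\<lambda>y. (y, z)) -` S) = emeasure lborel ((\<lambda>x. x + - z) -` P \<inter> A)"
      using emeasure_lborel_translate[OF sets.Int[OF borel_translate_vimage[OF domain_borel] A(1)]]
      by (simp only:)
    with True show ?thesis
      using emeasure_translate_domain_Int[OF A, of "- z"] by simp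
  qed (simp add: S_def)
  have "(\<integral>\<^sup>+y. emeasure lborel {z \<in> supball R. z + y \<in> A} * indicator P y \<partial>lborel)
      = emeasure (lborel \<Otimes>\<^sub>M lborel) S"
    unfolding lborel.emeasure_pair_measure_alt[OF S]
    by (intro nn_integral_cong) (auto simp: S_def indicator_def vimage_def)
  also have "\<dots> = (\<integral>\<^sup>+z. emeasure lborel (P \<inter> A) * indicator (supball R) (z :: real^'n) \<partial>lborel)"
    unfolding lborel_pair.emeasure_pair_measure_alt2[OF S] slice ..
  also have "\<dots> = emeasure lborel (P \<inter> A) * emeasure lborel (supball R :: (real^'n) set)"
    by (simp add: nn_integral_cmult_indicator)
  finally show ?thesis .
qed

lemma measure_supball_Int_bounds:
  assumes A: "A \<in> sets borel" "periodic_set \<Lambda> A" and d: "P \<subseteq> supball d"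
  shows "measure lborel (supball (R - d) \<inter> A) * measure lborel P
      \<le> measure lborel (P \<inter> A) * measure lborel (supball R :: (real^'n) set)"
    and "measure lborel (P \<inter> A) * measure lborel (supball R :: (real^'n) set)
      \<le> measure lborel (supball (R + d) \<inter> A) * measure lborel P"
proof -
  define F where "F y = emeasure lborel {z \<in> supball R. z + y \<in> A}" for y :: "real^'n"
  have F_bounds: "emeasure lborel (supball (R - d) \<inter> A) \<le> F y"
    "F y \<le> emeasure lborel (supball (R + d) \<inter> A)" if "y \<in> P" for y
  proof -
    define X where "X = {w. w - y \<in> supball R} \<inter> A"
    have X: "X \<in> sets borel"
      unfolding X_def using A by measurable
    have "F y = emeasure lborel ((\<lambda>z. z + y) -` X)"
      unfolding F_def X_def by (rule arg_cong[where f="emeasure lborel"]) auto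
    also have "\<dots> = emeasure lborel X"
      by (rule emeasure_lborel_translate[OF X])
    finally have "F y = emeasure lborel X" .
    moreover have "supball (R - d) \<inter> A \<subseteq> X" "X \<subseteq> supball (R + d) \<inter> A"
      using supball_shift_bounds[of y d R] that d unfolding X_def by auto
    ultimately show "emeasure lborel (supball (R - d) \<inter> A) \<le> F y"
      "F y \<le> emeasure lborel (supball (R + d) \<inter> A)"
      using X A by (auto intro!: emeasure_mono)
  qed
  have "emeasure lborel (supball (R - d) \<inter> A) * emeasure lborel P
      = (\<integral>\<^sup>+y. emeasure lborel (supball (R - d) \<inter> A) * indicator P y \<partial>lborel)"
    by (simp add: nn_integral_cmult_indicator)
  also have "\<dots> \<le> (\<integral>\<^sup>+y. F y * indicator P y \<partial>lborel)"
    using F_bounds(1) by (intro nn_integral_mono) (simp split: split_indicator)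
  also have "\<dots> = emeasure lborel (P \<inter> A) * emeasure lborel (supball R :: (real^'n) set)"
    unfolding F_def by (rule nn_integral_supball_slices[OF A])
  finally have lower: "emeasure lborel (supball (R - d) \<inter> A) * emeasure lborel P
      \<le> emeasure lborel (P \<inter> A) * emeasure lborel (supball R :: (real^'n) set)" .
  have "emeasure lborel (P \<inter> A) * emeasure lborel (supball R :: (real^'n) set)
      = (\<integral>\<^sup>+y. F y * indicator P y \<partial>lborel)"
    unfolding F_def by (rule nn_integral_supball_slices[OF A, symmetric])
  also have "\<dots> \<le> (\<integral>\<^sup>+y. emeasure lborel (supball (R + d) \<inter> A) * indicator P y \<partial>lborel)"
    using F_bounds(2) by (intro nn_integral_mono) (simp split: split_indicator)
  also have "\<dots> = emeasure lborel (supball (R + d) \<inter> A) * emeasure lborel P"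
    by (simp add: nn_integral_cmult_indicator)
  finally have upper: "emeasure lborel (P \<inter> A) * emeasure lborel (supball R :: (real^'n) set)
      \<le> emeasure lborel (supball (R + d) \<inter> A) * emeasure lborel P" .
  have real: "emeasure lborel X = ennreal (measure lborel X)"
    if "X \<in> {P, P \<inter> A, supball R, supball (R - d) \<inter> A, supball (R + d) \<inter> A}" for X
    using that emeasure_domain_Int_finite[of UNIV] emeasure_domain_Int_finite[of A]
      emeasure_supball_Int_finite[of _ A] emeasure_supball_Int_finite[of R UNIV]
    by (auto intro: emeasure_eq_ennreal_measure)
  from lower upper show
    "measure lborel (supball (R - d) \<inter> A) * measure lborel P
      \<le> measure lborel (P \<inter> A) * measure lborel (supball R :: (real^'n) set)"
    "measure lborel (P \<inter> A) * measure lborel (supball R :: (real^'n) set)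
      \<le> measure lborel (supball (R + d) \<inter> A) * measure lborel P"
    by (simp_all add: real ennreal_mult'[symmetric] ennreal_le_iff)
qed

lemma Dc_periodic:
  assumes A: "A \<in> sets borel" "periodic_set \<Lambda> A"
  shows "Dc A = measure lborel (P \<inter> A) / measure lborel P"
proof -
  obtain d where "d > 0" and norm_le: "\<And>x. x \<in> P \<Longrightarrow> norm x \<le> d"
    using bounded_domain by (auto simp: bounded_pos)
  then have d: "P \<subseteq> supball d"
    unfolding supball_def by (auto intro: order_trans[OF component_le_norm_cart])
  define k where "k = CARD('n)"
  define a where "a R = measure lborel (supball R \<inter> A) / 2 ^ k" for R
  have "((\<lambda>R. a R / R ^ k) \<longlongrightarrow> measure lborel (P \<inter> A) / measure lborel P) at_top"
  proof (rule tendsto_div_power_sandwich[OF measure_domain_pos])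
    show "d \<ge> 0" using \<open>d > 0\<close> by simp
    show "a R * measure lborel P \<le> measure lborel (P \<inter> A) * (R + d) ^ k" if "R > d" for R
    proof -
      have "measure lborel (supball R \<inter> A) * measure lborel P
          \<le> measure lborel (P \<inter> A) * (2 ^ k * (R + d) ^ k)"
        using measure_supball_Int_bounds(1)[OF A d, of "R + d"] that \<open>d > 0\<close>
        by (simp add: k_def measure_supball)
      then show ?thesis by (simp add: a_def field_simps)
    qed
    show "measure lborel (P \<inter> A) * (R - d) ^ k \<le> a R * measure lborel P" if "R > d" for R
    proof -
      have "measure lborel (P \<inter> A) * (2 ^ k * (R - d) ^ k)
          \<le> measure lborel (supball R \<inter> A) * measure lborel P"
        using measure_supball_Int_bounds(2)[OF A d, of "R - d"] that
        by (simp add: k_def measure_supball)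
      then show ?thesis by (simp add: a_def field_simps)
    qed
  qed
  moreover have "\<forall>\<^sub>F R in at_top. a R / R ^ k
      = measure lebesgue (supball R \<inter> A) / measure lebesgue (supball R :: (real^'n) set)"
    using eventually_ge_at_top[of 0]
    by eventually_elim (use A in \<open>simp add: a_def k_def measure_supball power_mult_distrib\<close>)
  ultimately show ?thesis
    unfolding Dc_def by (simp add: tendsto_cong tendsto_Lim)
qed

lemma Dc_translate:
  assumes A: "A \<in> sets borel" "periodic_set \<Lambda> A"
  shows "Dc ((\<lambda>x. x + v) ` A) = Dc A"
proof -
  have "emeasure lborel (P \<inter> (\<lambda>x. x + - v) -` A)
      = emeasure lborel ((\<lambda>x. x + - v) -` ((\<lambda>x. x + v) -` P \<inter> A))"
    by (rule arg_cong[where f="emeasure lborel"]) auto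
  also have "\<dots> = emeasure lborel ((\<lambda>x. x + v) -` P \<inter> A)"
    by (intro emeasure_lborel_translate sets.Int borel_translate_vimage domain_borel A(1))
  also have "\<dots> = emeasure lborel (P \<inter> A)"
    by (rule emeasure_translate_domain_Int[OF A])
  finally have "emeasure lborel (P \<inter> (\<lambda>x. x + - v) -` A) = emeasure lborel (P \<inter> A)" .
  moreover have "(\<lambda>x. x + - v) -` A \<in> sets borel"
    using A(1) by (rule borel_translate_vimage)
  ultimately show ?thesis
    using A periodic_set_translate[OF A(2), of v]
    by (simp add: Dc_periodic translate_image_eq_vimage measure_def)
qed

lemma Dc_Int_ge:
  assumes A: "A \<in> sets borel" "periodic_set \<Lambda> A" and C: "C \<in> sets borel" "periodic_set \<Lambda> C"
  shows "Dc A + Dc C - 1 \<le> Dc (A \<inter> C)"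
proof -
  have fmeasurable: "P \<inter> X \<in> fmeasurable lborel" if "X \<in> sets borel" for X
    using that emeasure_domain_Int_finite[of X] by (intro fmeasurableI) (auto simp: less_top)
  have "measure lborel (P \<inter> A) + measure lborel (P \<inter> C) - measure lborel (P \<inter> (A \<inter> C))
      = measure lborel ((P \<inter> A) \<union> (P \<inter> C))"
    using measure_Un3[OF fmeasurable[OF A(1)] fmeasurable[OF C(1)]]
    by (simp add: Int_ac)
  also have "\<dots> \<le> measure lborel P"
    using fmeasurable[of UNIV] A(1) C(1) by (intro measure_mono_fmeasurable) auto
  finally have "(measure lborel (P \<inter> A) + measure lborel (P \<inter> C) - measure lborel P) / measure lborel P
      \<le> measure lborel (P \<inter> (A \<inter> C)) / measure lborel P"
    using measure_domain_pos by (intro divide_right_mono) auto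
  then show ?thesis
    using A C measure_domain_pos
    by (simp add: Dc_periodic periodic_set_Int diff_divide_distrib add_divide_distrib)
qed

end

lemma matrix_inv_invertible:
  fixes B :: "real^'n^'n"
  assumes "invertible B"
  shows "B ** matrix_inv B = mat 1" "matrix_inv B ** B = mat 1"
  using someI_ex[OF assms[unfolded invertible_def]] by (simp_all add: matrix_inv_def)

lemma lattice_ofI: "l = B *v (\<chi> i. real_of_int (z i)) \<Longrightarrow> l \<in> lattice_of B"
  by (auto simp: lattice_of_def)

lemma lattice_of_add: "l \<in> lattice_of B \<Longrightarrow> l' \<in> lattice_of B \<Longrightarrow> l + l' \<in> lattice_of B"
proof -
  assume "l \<in> lattice_of B" "l' \<in> lattice_of B"
  then obtain z z' where "l = B *v (\<chi> i. real_of_int (z i))" "l' = B *v (\<chi> i. real_of_int (z' i))"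
    by (auto simp: lattice_of_def)
  moreover have "(\<chi> i. real_of_int (z i + z' i)) = (\<chi> i. real_of_int (z i)) + (\<chi> i. real_of_int (z' i))"
    by (simp add: vec_eq_iff)
  ultimately have "l + l' = B *v (\<chi> i. real_of_int (z i + z' i))"
    by (simp add: matrix_vector_right_distrib)
  then show ?thesis
    using lattice_ofI[of "l + l'" B "\<lambda>i. z i + z' i"] by simp
qed

lemma lattice_of_uminus: "l \<in> lattice_of B \<Longrightarrow> - l \<in> lattice_of B"
proof -
  assume "l \<in> lattice_of B"
  then obtain z where "l = B *v (\<chi> i. real_of_int (z i))"
    by (auto simp: lattice_of_def)
  moreover have "(\<chi> i. real_of_int (- z i)) = (-1::real) *\<^sub>R (\<chi> i. real_of_int (z i))"
    by (simp add: vec_eq_iff)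
  ultimately have "- l = B *v (\<chi> i. real_of_int (- z i))"
    using matrix_vector_mult_scaleR[of B "-1"] by simp
  then show ?thesis
    using lattice_ofI[of "- l" B "\<lambda>i. - z i"] by simp
qed

lemma countable_lattice_of:
  fixes B :: "real^'n^'n"
  shows "countable (lattice_of B)"
proof -
  have "lattice_of B = range (\<lambda>z. B *v (\<chi> i. real_of_int (z i)))"
    unfolding lattice_of_def by auto
  then show ?thesis by simp
qed

lemma borel_measurable_matrix_vector_component [measurable]:
  fixes M :: "real^'n^'m"
  shows "(\<lambda>x. (M *v x) $ i) \<in> borel_measurable borel"
  by (intro borel_measurable_continuous_onI continuous_intros)

text \<open>For invertible \<open>B\<close> this is the half-open cell \<open>B [0,1)\<^sup>n\<close>; \<open>matrix_inv B\<close> is junk otherwise.\<close>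

definition lattice_cell :: "real^'n^'n \<Rightarrow> (real^'n) set" where
  "lattice_cell B = {y. \<forall>i. 0 \<le> (matrix_inv B *v y) $ i \<and> (matrix_inv B *v y) $ i < 1}"

lemma bounded_fundamental_domain_lattice_cell:
  fixes B :: "real^'n^'n"
  assumes "invertible B"
  shows "bounded_fundamental_domain (lattice_of B) (lattice_cell B)"
proof -
  define Bi where "Bi = matrix_inv B"
  have B_Bi: "B *v (Bi *v x) = x" and Bi_B: "Bi *v (B *v x) = x" for x
    using matrix_inv_invertible[OF assms] by (simp_all add: Bi_def matrix_vector_mul_assoc)
  have cell: "y \<in> lattice_cell B \<longleftrightarrow> (\<forall>i. 0 \<le> (Bi *v y) $ i \<and> (Bi *v y) $ i < 1)" for y
    by (simp add: lattice_cell_def Bi_def)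
  have coord: "(Bi *v (y - B *v (\<chi> i. real_of_int (z i)))) $ i = (Bi *v y) $ i - z i" for y z i
    by (simp add: matrix_vector_mult_diff_distrib Bi_B)
  have "\<exists>!l. l \<in> lattice_of B \<and> y - l \<in> lattice_cell B" for y
  proof
    let ?l = "B *v (\<chi> i. real_of_int \<lfloor>(Bi *v y) $ i\<rfloor>)"
    show "?l \<in> lattice_of B \<and> y - ?l \<in> lattice_cell B"
      by (auto simp: cell coord intro: lattice_ofI) linarith
    show "l = ?l" if l_cell: "l \<in> lattice_of B \<and> y - l \<in> lattice_cell B" for l
    proof -
      obtain z where l: "l = B *v (\<chi> i. real_of_int (z i))"
        using l_cell unfolding lattice_of_def by blast
      have bounds: "0 \<le> (Bi *v (y - l)) $ i \<and> (Bi *v (y - l)) $ i < 1" for i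
        using l_cell by (simp add: cell)
      have "z i = \<lfloor>(Bi *v y) $ i\<rfloor>" for i
        using bounds[of i] by (intro floor_unique[symmetric]) (simp_all add: l coord)
      then show ?thesis by (simp add: l)
    qed
  qed
  moreover have "lattice_cell B \<in> sets borel"
    unfolding lattice_cell_def by measurable
  moreover have "lattice_cell B \<subseteq> (\<lambda>x. B *v x) ` cbox 0 1"
  proof
    fix y assume "y \<in> lattice_cell B"
    then have "Bi *v y \<in> cbox 0 1"
      by (auto simp: cell mem_box_cart less_imp_le)
    then show "y \<in> (\<lambda>x. B *v x) ` cbox 0 1"
      using B_Bi by (metis image_eqI)
  qed
  moreover have "bounded ((\<lambda>x. B *v x) ` cbox 0 1)"
    by (intro compact_imp_bounded compact_continuous_image continuous_intros) auto
  ultimately show ?thesis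
    by unfold_locales (auto simp: fundamental_domain_def countable_lattice_of lattice_of_uminus
        intro: bounded_subset)
qed

lemma msum_eq_UN: "msum W \<Lambda> = (\<Union>l\<in>\<Lambda>. (\<lambda>x. x + - l) -` W)"
  unfolding msum_def by force

lemma msum_borel:
  assumes "countable \<Lambda>" "W \<in> sets borel"
  shows "msum W \<Lambda> \<in> sets borel"
  unfolding msum_eq_UN using assms by (intro sets.countable_UN'' borel_translate_vimage)

lemma periodic_set_msum:
  assumes "\<And>l l'. l \<in> \<Lambda> \<Longrightarrow> l' \<in> \<Lambda> \<Longrightarrow> l + l' \<in> \<Lambda>" "\<And>l. l \<in> \<Lambda> \<Longrightarrow> - l \<in> \<Lambda>"
  shows "periodic_set \<Lambda> (msum W \<Lambda>)"
proof -
  have "(\<exists>l'\<in>\<Lambda>. x + l - l' \<in> W) \<longleftrightarrow> (\<exists>l'\<in>\<Lambda>. x - l' \<in> W)" if "l \<in> \<Lambda>" for l x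
  proof
    assume "\<exists>l'\<in>\<Lambda>. x + l - l' \<in> W"
    then obtain l' where l': "l' \<in> \<Lambda>" "x + l - l' \<in> W" by blast
    then have "x - (l' + - l) \<in> W" by (simp add: algebra_simps)
    moreover have "l' + - l \<in> \<Lambda>" using assms that l' by blast
    ultimately show "\<exists>l'\<in>\<Lambda>. x - l' \<in> W" by blast
  next
    assume "\<exists>l'\<in>\<Lambda>. x - l' \<in> W"
    then obtain l' where l': "l' \<in> \<Lambda>" "x - l' \<in> W" by blast
    then have "x + l - (l' + l) \<in> W" by simp
    moreover have "l' + l \<in> \<Lambda>" using assms that l' by blast
    ultimately show "\<exists>l'\<in>\<Lambda>. x + l - l' \<in> W" by blast
  qed
  then show ?thesis
    unfolding periodic_set_def msum_eq_UN by auto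
qed

lemma Wcube_borel: "Wcube \<in> sets borel"
  unfolding Wcube_def by measurable

theorem lemma2p12:
  fixes L :: "(real^'n) set" and v :: "real^'n"
  assumes "covolume_one_lattice L"
    and "Dc (msum Wcube L) \<ge> 1/2"
  shows "Dc ((\<lambda>x. x + v) ` msum Wcube L \<inter> msum Wcube L) \<ge> 2 * Dc (msum Wcube L) - 1"
proof -
  obtain B where "invertible B" and L: "L = lattice_of B"
    using assms(1) by (auto simp: covolume_one_lattice_def)
  then interpret bounded_fundamental_domain L "lattice_cell B"
    by (simp add: bounded_fundamental_domain_lattice_cell)
  define E where "E = msum Wcube L"
  have E: "E \<in> sets borel" "periodic_set L E"
    unfolding E_def L
    by (simp_all add: msum_borel countable_lattice_of Wcube_borel periodic_set_msum lattice_of_add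
        lattice_of_uminus)
  have E': "(\<lambda>x. x + v) ` E \<in> sets borel" "periodic_set L ((\<lambda>x. x + v) ` E)"
    using borel_translate_vimage[OF E(1)] periodic_set_translate[OF E(2)]
    by (simp_all only: translate_image_eq_vimage)
  show ?thesis
    using Dc_Int_ge[OF E' E] Dc_translate[OF E] unfolding E_def by simp
qed

end
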